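(* If a CCCP configuration $\mathcal C$ is well-formed and $\mathcal C\to\mathcal C'$, then $\mathcal C'$ is well-formed.
   Context: CCCP syntax. Fix a set of channels (ranged over by $c,d$) and a set of values containing data variables $x,y$ and a special error value $\mathtt{err}$; closed values $v,w$ contain no variables, and each closed value $v$ has a transmission time $\delta_v\in\mathbb{N}$ with $\delta_v\ge 1$. Expressions $e$ are built from values; closed expressions evaluate to closed values via $[\![e]\!]$. Station code (processes) is given by $P,Q ::= c!\langle e\rangle.P \mid \lfloor ?c(x).P\rfloor Q \mid \sigma.P \mid \tau.P \mid P+Q \mid [b]P,Q \mid X \mid \mathbf{0} \mid \mathrm{fix}\,X.P$, where $b$ is either $e_1=e_2$ or $\mathrm{exp}(c)$, $[b]P,Q$ is a conditional (then-branch $P$, else-branch $Q$), $\lfloor ?c(x).P\rfloor Q$ is a receiver on $c$ with timeout branch $Q$ ($x$ bound in $P$), $\sigma.P$ is a one-unit delay and $\sigma^n.P$ denotes $n$ nested delays. System terms are $W ::= P \mid \lfloor ?c(x).P\rfloor \mid W_1|W_2 \mid \nu c{:}(n,v).W$, where $\lfloor ?c(x).P\rfloor$ is an active receiver ($x$ bound in $P$) and $\nu c{:}(n,v).W$ restricts $c$ with local channel state $(n,v)$. In $\mathrm{fix}\,X.P$ every occurrence of $X$ in $P$ is guarded, i.e. lies within a broadcast prefix, a receiver continuation, a timeout branch, a $\sigma$-prefix, or a branch of a conditional. Terms are identified up to $\alpha$-conversion. A channel environment is a map $\Gamma$ from channels to $\mathbb{N}\times$(closed values); write $\Gamma\vdash_t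 c:n$ and $\Gamma\vdash_v c:w$ when $\Gamma(c)=(n,w)$; $c$ is idle in $\Gamma$ if $\Gamma\vdash_t c:0$ and exposed otherwise; $\Gamma[c\mapsto(n,v)]$ is $\Gamma$ updated at $c$; $\Gamma\le\Gamma'$ iff for every $c$, $\Gamma\vdash_t c:n$ and $\Gamma'\vdash_t c:m$ imply $n\le m$. A configuration $\Gamma\triangleright W$ is a channel environment together with a closed system term (no free data or process variables). Intensional semantics. Actions $\lambda$ are $c!v$, $c?v$, $\sigma$, $\tau$. The environment update $\lambda(\Gamma)$ is: $\sigma(\Gamma)(c)=(\max(n-1,0),w)$ whenever $\Gamma(c)=(n,w)$; $c!v(\Gamma)$ agrees with $\Gamma$ except at $c$, where it is $(\delta_v,v)$ if $c$ is idle in $\Gamma$ and $(\max(\delta_v,n),\mathtt{err})$ if $\Gamma\vdash_t c:n>0$; $c?v(\Gamma)=c!v(\Gamma)$; $\tau(\Gamma)=\Gamma$. The predicate $\mathrm{rcv}(W,c)$ on terms is: true for $\lfloor ?d(x).P\rfloor Q$ iff $d=c$; $\mathrm{rcv}(P+Q,c)=\mathrm{rcv}(P,c)\vee\mathrm{rcv}(Q,c)$; $\mathrm{rcv}(\mathrm{fix}\,X.P,c)=\mathrm{rcv}(P,c)$; $\mathrm{rcv}(W_1|W_2,c)=\mathrm{rcv}(W_1,c)\vee\mathrm{rcv}(W_2,c)$; $\mathrm{rcv}(\nu d{:}(n,v).W,c)=\mathrm{rcv}(W,c)$ (with $d\neq c$ by $\alpha$-conversion); false for all other forms (broadcasts,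 $\tau.P$, $\sigma.P$, conditionals, $X$, $\mathbf 0$, active receivers). Then $\mathrm{rcv}(\Gamma\triangleright W,c)$ holds iff $c$ is idle in $\Gamma$ and $\mathrm{rcv}(W,c)$. Transitions $\Gamma\triangleright W\xrightarrow{\lambda}W'$ are the least relation closed under: (Snd) $[\![e]\!]=v$ implies $\Gamma\triangleright c!\langle e\rangle.P\xrightarrow{c!v}\sigma^{\delta_v}.P$; (Rcv) $c$ idle in $\Gamma$ implies $\Gamma\triangleright\lfloor ?c(x).P\rfloor Q\xrightarrow{c?v}\lfloor ?c(x).P\rfloor$; (RcvIgn) $\neg\mathrm{rcv}(\Gamma\triangleright W,c)$ implies $\Gamma\triangleright W\xrightarrow{c?v}W$; (Sync) $\Gamma\triangleright W_1\xrightarrow{c!v}W_1'$ and $\Gamma\triangleright W_2\xrightarrow{c?v}W_2'$ imply $\Gamma\triangleright W_1|W_2\xrightarrow{c!v}W_1'|W_2'$, and symmetrically; (RcvPar) $\Gamma\triangleright W_i\xrightarrow{c?v}W_i'$ for $i=1,2$ imply $\Gamma\triangleright W_1|W_2\xrightarrow{c?v}W_1'|W_2'$; (TimeNil) $\Gamma\triangleright\mathbf 0\xrightarrow{\sigma}\mathbf 0$; (Sleep) $\Gamma\triangleright\sigma.P\xrightarrow{\sigma}P$; (ActRcv) $\Gamma\vdash_t c:n$, $n>1$ imply $\Gamma\triangleright\lfloor ?c(x).P\rfloor\xrightarrow{\sigma}\lfloor ?c(x).P\rfloor$; (EndRcv) $\Gamma\vdash_t c:1$, $\Gamma\vdash_v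 c:w$ imply $\Gamma\triangleright\lfloor ?c(x).P\rfloor\xrightarrow{\sigma}\{w/x\}P$; (Timeout) $c$ idle in $\Gamma$ implies $\Gamma\triangleright\lfloor ?c(x).P\rfloor Q\xrightarrow{\sigma}Q$; (RcvLate) $c$ exposed in $\Gamma$ implies $\Gamma\triangleright\lfloor ?c(x).P\rfloor Q\xrightarrow{\tau}\lfloor ?c(x).\{\mathtt{err}/x\}P\rfloor$; (Tau) $\Gamma\triangleright\tau.P\xrightarrow{\tau}P$; (Then)/(Else) $\Gamma\triangleright[b]P,Q\xrightarrow{\tau}\sigma.P$ if $[\![b]\!]_\Gamma$ is true and $\xrightarrow{\tau}\sigma.Q$ otherwise, where $[\![e_1=e_2]\!]_\Gamma$ is true iff $[\![e_1]\!]=[\![e_2]\!]$ and $[\![\mathrm{exp}(c)]\!]_\Gamma$ is true iff $c$ is exposed in $\Gamma$; (TimePar) $\Gamma\triangleright W_i\xrightarrow{\sigma}W_i'$ for $i=1,2$ imply $\Gamma\triangleright W_1|W_2\xrightarrow{\sigma}W_1'|W_2'$; (TauPar) $\Gamma\triangleright W_1\xrightarrow{\tau}W_1'$ implies $\Gamma\triangleright W_1|W_2\xrightarrow{\tau}W_1'|W_2$, and symmetrically; (Rec) $\Gamma\triangleright\{\mathrm{fix}\,X.P/X\}P\xrightarrow{\lambda}W$ implies $\Gamma\triangleright\mathrm{fix}\,X.P\xrightarrow{\lambda}W$; (Sum) for $\lambda\in\{\tau,c!v\}$, $\Gamma\triangleright P\xrightarrow{\lambda}W$ implies $\Gamma\triangleright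 P+Q\xrightarrow{\lambda}W$, and symmetrically; (SumTime) $\Gamma\triangleright P\xrightarrow{\sigma}P'$, $\Gamma\triangleright Q\xrightarrow{\sigma}Q'$ imply $\Gamma\triangleright P+Q\xrightarrow{\sigma}P'+Q'$; (SumRcv) $\Gamma\triangleright P\xrightarrow{c?v}W$ and $\mathrm{rcv}(\Gamma\triangleright P,c)$ imply $\Gamma\triangleright P+Q\xrightarrow{c?v}W$, and symmetrically; (ResI) $\Gamma[c\mapsto(n,v)]\triangleright W\xrightarrow{c!w}W'$ implies $\Gamma\triangleright\nu c{:}(n,v).W\xrightarrow{\tau}\nu c{:}(c!w(\Gamma[c\mapsto(n,v)]))(c).W'$; (ResV) $\Gamma[c\mapsto(n,v)]\triangleright W\xrightarrow{\lambda}W'$ with $c$ not occurring in $\lambda$ implies $\Gamma\triangleright\nu c{:}(n,v).W\xrightarrow{\lambda}\nu c{:}(\lambda(\Gamma[c\mapsto(n,v)]))(c).W'$. Reductions. $\Gamma\triangleright W\to\Gamma'\triangleright W'$ iff $\Gamma\triangleright W\xrightarrow{\lambda}W'$ for some $\lambda\in\{c!v,\sigma,\tau\}$ and $\Gamma'=\lambda(\Gamma)$; it is instantaneous ($\to_i$) if $\lambda\neq\sigma$ and timed ($\to_\sigma$) if $\lambda=\sigma$. Well-formedness. The set of well-formed configurations is the least set such that: $\Gamma\triangleright P$ is well-formed for every closed process $P$; $\Gamma\triangleright\lfloor ?c(x).P\rfloor$ is well-formed whenever $c$ is exposed in $\Gamma$; $\Gamma\triangleright W_1|W_2$ is well-formed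 whenever $\Gamma\triangleright W_1$ and $\Gamma\triangleright W_2$ are; $\Gamma\triangleright\nu c{:}(n,v).W$ is well-formed whenever $\Gamma[c\mapsto(n,v)]\triangleright W$ is. *)

theory Defs
  imports Main
begin

section \<open>Syntax of CCCP\<close>

text \<open>Data variables and process variables are represented by natural numbers.
  Channels range over an arbitrary type 'ch, data constants over 'd, and
  expression operators over 'f.\<close>

datatype 'd val = VVar nat | VErr | VCon 'd

datatype ('d,'f) exp = EVal "'d val" | EApp 'f "('d,'f) exp list"

datatype ('ch,'d,'f) bexp = BEq "('d,'f) exp" "('d,'f) exp" | BExp 'ch

datatype ('ch,'d,'f) proc =
    PBcast 'ch "('d,'f) exp" "('ch,'d,'f) proc"
  | PRecv 'ch nat "('ch,'d,'f) proc" "('ch,'d,'f) proc"    (* |_?c(x).P_| Q *)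
  | PSigma "('ch,'d,'f) proc"
  | PTau "('ch,'d,'f) proc"
  | PSum "('ch,'d,'f) proc" "('ch,'d,'f) proc"
  | PCond "('ch,'d,'f) bexp" "('ch,'d,'f) proc" "('ch,'d,'f) proc"
  | PVar nat
  | PNil
  | PFix nat "('ch,'d,'f) proc"

datatype ('ch,'d,'f) sys =
    SProc "('ch,'d,'f) proc"
  | SAct 'ch nat "('ch,'d,'f) proc"                         (* active receiver |_?c(x).P_| *)
  | SPar "('ch,'d,'f) sys" "('ch,'d,'f) sys"
  | SNu 'ch "nat \<times> 'd val" "('ch,'d,'f) sys"

datatype ('ch,'d) act = AOut 'ch "'d val" | AIn 'ch "'d val" | ASig | ATau

type_synonym ('ch,'d) env = "'ch \<Rightarrow> nat \<times> 'd val"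

fun fvv :: "'d val \<Rightarrow> nat set" where
  "fvv (VVar x) = {x}" | "fvv VErr = {}" | "fvv (VCon d) = {}"

definition closed_val :: "'d val \<Rightarrow> bool" where
  "closed_val v \<longleftrightarrow> fvv v = {}"

primrec fve :: "('d,'f) exp \<Rightarrow> nat set" where
  "fve (EVal v) = fvv v"
| "fve (EApp f es) = \<Union> (set (map fve es))"

fun fvb :: "('ch,'d,'f) bexp \<Rightarrow> nat set" where
  "fvb (BEq e1 e2) = fve e1 \<union> fve e2" | "fvb (BExp c) = {}"

primrec fvp :: "('ch,'d,'f) proc \<Rightarrow> nat set" where
  "fvp (PBcast c e P) = fve e \<union> fvp P"
| "fvp (PRecv c x P Q) = (fvp P - {x}) \<union> fvp Q"
| "fvp (PSigma P) = fvp P"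
| "fvp (PTau P) = fvp P"
| "fvp (PSum P Q) = fvp P \<union> fvp Q"
| "fvp (PCond b P Q) = fvb b \<union> fvp P \<union> fvp Q"
| "fvp (PVar X) = {}"
| "fvp PNil = {}"
| "fvp (PFix X P) = fvp P"

primrec fpv :: "('ch,'d,'f) proc \<Rightarrow> nat set" where
  "fpv (PBcast c e P) = fpv P"
| "fpv (PRecv c x P Q) = fpv P \<union> fpv Q"
| "fpv (PSigma P) = fpv P"
| "fpv (PTau P) = fpv P"
| "fpv (PSum P Q) = fpv P \<union> fpv Q"
| "fpv (PCond b P Q) = fpv P \<union> fpv Q"
| "fpv (PVar X) = {X}"
| "fpv PNil = {}"
| "fpv (PFix X P) = fpv P - {X}"

primrec fvs :: "('ch,'d,'f) sys \<Rightarrow> nat set" where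
  "fvs (SProc P) = fvp P"
| "fvs (SAct c x P) = fvp P - {x}"
| "fvs (SPar W1 W2) = fvs W1 \<union> fvs W2"
| "fvs (SNu c s W) = fvv (snd s) \<union> fvs W"

primrec fpvs :: "('ch,'d,'f) sys \<Rightarrow> nat set" where
  "fpvs (SProc P) = fpv P"
| "fpvs (SAct c x P) = fpv P"
| "fpvs (SPar W1 W2) = fpvs W1 \<union> fpvs W2"
| "fpvs (SNu c s W) = fpvs W"

definition closed_sys :: "('ch,'d,'f) sys \<Rightarrow> bool" where
  "closed_sys W \<longleftrightarrow> fvs W = {} \<and> fpvs W = {}"

definition env_ok :: "('ch,'d) env \<Rightarrow> bool" where
  "env_ok \<Gamma> \<longleftrightarrow> (\<forall>c. closed_val (snd (\<Gamma> c)))"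

primrec unguarded :: "nat \<Rightarrow> ('ch,'d,'f) proc \<Rightarrow> bool" where
  "unguarded X (PBcast c e P) = False"
| "unguarded X (PRecv c x P Q) = False"
| "unguarded X (PSigma P) = False"
| "unguarded X (PTau P) = unguarded X P"
| "unguarded X (PSum P Q) = (unguarded X P \<or> unguarded X Q)"
| "unguarded X (PCond b P Q) = False"
| "unguarded X (PVar Y) = (X = Y)"
| "unguarded X PNil = False"
| "unguarded X (PFix Y P) = (X \<noteq> Y \<and> unguarded X P)"

primrec guarded_proc :: "('ch,'d,'f) proc \<Rightarrow> bool" where
  "guarded_proc (PBcast c e P) = guarded_proc P"
| "guarded_proc (PRecv c x P Q) = (guarded_proc P \<and> guarded_proc Q)"
| "guarded_proc (PSigma P) = guarded_proc P"
| "guarded_proc (PTau P) = guarded_proc P"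
| "guarded_proc (PSum P Q) = (guarded_proc P \<and> guarded_proc Q)"
| "guarded_proc (PCond b P Q) = (guarded_proc P \<and> guarded_proc Q)"
| "guarded_proc (PVar Y) = True"
| "guarded_proc PNil = True"
| "guarded_proc (PFix X P) = (\<not> unguarded X P \<and> guarded_proc P)"

primrec guarded_sys :: "('ch,'d,'f) sys \<Rightarrow> bool" where
  "guarded_sys (SProc P) = guarded_proc P"
| "guarded_sys (SAct c x P) = guarded_proc P"
| "guarded_sys (SPar W1 W2) = (guarded_sys W1 \<and> guarded_sys W2)"
| "guarded_sys (SNu c s W) = guarded_sys W"

fun substvv :: "nat \<Rightarrow> 'd val \<Rightarrow> 'd val \<Rightarrow> 'd val" where
  "substvv x w (VVar y) = (if x = y then w else VVar y)"
| "substvv x w v = v"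

primrec substve :: "nat \<Rightarrow> 'd val \<Rightarrow> ('d,'f) exp \<Rightarrow> ('d,'f) exp" where
  "substve x w (EVal v) = EVal (substvv x w v)"
| "substve x w (EApp f es) = EApp f (map (substve x w) es)"

fun substvb :: "nat \<Rightarrow> 'd val \<Rightarrow> ('ch,'d,'f) bexp \<Rightarrow> ('ch,'d,'f) bexp" where
  "substvb x w (BEq e1 e2) = BEq (substve x w e1) (substve x w e2)"
| "substvb x w (BExp c) = BExp c"

text \<open>{w/x}P (substitution of a closed value for a data variable; no capture possible).\<close>
primrec substv :: "nat \<Rightarrow> 'd val \<Rightarrow> ('ch,'d,'f) proc \<Rightarrow> ('ch,'d,'f) proc" where
  "substv x w (PBcast c e P) = PBcast c (substve x w e) (substv x w P)"
| "substv x w (PRecv c y P Q) =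
     PRecv c y (if x = y then P else substv x w P) (substv x w Q)"
| "substv x w (PSigma P) = PSigma (substv x w P)"
| "substv x w (PTau P) = PTau (substv x w P)"
| "substv x w (PSum P Q) = PSum (substv x w P) (substv x w Q)"
| "substv x w (PCond b P Q) = PCond (substvb x w b) (substv x w P) (substv x w Q)"
| "substv x w (PVar X) = PVar X"
| "substv x w PNil = PNil"
| "substv x w (PFix X P) = PFix X (substv x w P)"

primrec substp :: "nat \<Rightarrow> ('ch,'d,'f) proc \<Rightarrow> ('ch,'d,'f) proc \<Rightarrow> ('ch,'d,'f) proc" where
  "substp X R (PBcast c e P) = PBcast c e (substp X R P)"
| "substp X R (PRecv c y P Q) = PRecv c y (substp X R P) (substp X R Q)"
| "substp X R (PSigma P) = PSigma (substp X R P)"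
| "substp X R (PTau P) = PTau (substp X R P)"
| "substp X R (PSum P Q) = PSum (substp X R P) (substp X R Q)"
| "substp X R (PCond b P Q) = PCond b (substp X R P) (substp X R Q)"
| "substp X R (PVar Y) = (if X = Y then R else PVar Y)"
| "substp X R PNil = PNil"
| "substp X R (PFix Y P) = (if X = Y then PFix Y P else PFix Y (substp X R P))"

definition sigpow :: "nat \<Rightarrow> ('ch,'d,'f) proc \<Rightarrow> ('ch,'d,'f) proc" where
  "sigpow n P = (PSigma ^^ n) P"

section \<open>Alpha-conversion of restricted channels\<close>

definition swapc :: "'ch \<Rightarrow> 'ch \<Rightarrow> 'ch \<Rightarrow> 'ch" where
  "swapc a b c = (if c = a then b else if c = b then a else c)"

fun swap_bexp :: "'ch \<Rightarrow> 'ch \<Rightarrow> ('ch,'d,'f) bexp \<Rightarrow> ('ch,'d,'f) bexp" where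
  "swap_bexp a b (BEq e1 e2) = BEq e1 e2"
| "swap_bexp a b (BExp c) = BExp (swapc a b c)"

primrec swap_proc :: "'ch \<Rightarrow> 'ch \<Rightarrow> ('ch,'d,'f) proc \<Rightarrow> ('ch,'d,'f) proc" where
  "swap_proc a b (PBcast c e P) = PBcast (swapc a b c) e (swap_proc a b P)"
| "swap_proc a b (PRecv c y P Q) = PRecv (swapc a b c) y (swap_proc a b P) (swap_proc a b Q)"
| "swap_proc a b (PSigma P) = PSigma (swap_proc a b P)"
| "swap_proc a b (PTau P) = PTau (swap_proc a b P)"
| "swap_proc a b (PSum P Q) = PSum (swap_proc a b P) (swap_proc a b Q)"
| "swap_proc a b (PCond bb P Q) = PCond (swap_bexp a b bb) (swap_proc a b P) (swap_proc a b Q)"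
| "swap_proc a b (PVar Y) = PVar Y"
| "swap_proc a b PNil = PNil"
| "swap_proc a b (PFix Y P) = PFix Y (swap_proc a b P)"

primrec swap_sys :: "'ch \<Rightarrow> 'ch \<Rightarrow> ('ch,'d,'f) sys \<Rightarrow> ('ch,'d,'f) sys" where
  "swap_sys a b (SProc P) = SProc (swap_proc a b P)"
| "swap_sys a b (SAct c x P) = SAct (swapc a b c) x (swap_proc a b P)"
| "swap_sys a b (SPar W1 W2) = SPar (swap_sys a b W1) (swap_sys a b W2)"
| "swap_sys a b (SNu c s W) = SNu (swapc a b c) s (swap_sys a b W)"

fun fn_bexp :: "('ch,'d,'f) bexp \<Rightarrow> 'ch set" where
  "fn_bexp (BEq e1 e2) = {}" | "fn_bexp (BExp c) = {c}"

primrec fn_proc :: "('ch,'d,'f) proc \<Rightarrow> 'ch set" where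
  "fn_proc (PBcast c e P) = insert c (fn_proc P)"
| "fn_proc (PRecv c y P Q) = insert c (fn_proc P \<union> fn_proc Q)"
| "fn_proc (PSigma P) = fn_proc P"
| "fn_proc (PTau P) = fn_proc P"
| "fn_proc (PSum P Q) = fn_proc P \<union> fn_proc Q"
| "fn_proc (PCond b P Q) = fn_bexp b \<union> fn_proc P \<union> fn_proc Q"
| "fn_proc (PVar Y) = {}"
| "fn_proc PNil = {}"
| "fn_proc (PFix Y P) = fn_proc P"

primrec fn_sys :: "('ch,'d,'f) sys \<Rightarrow> 'ch set" where
  "fn_sys (SProc P) = fn_proc P"
| "fn_sys (SAct c x P) = insert c (fn_proc P)"
| "fn_sys (SPar W1 W2) = fn_sys W1 \<union> fn_sys W2"
| "fn_sys (SNu c s W) = fn_sys W - {c}"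

text \<open>Alpha-equivalence w.r.t. restricted channel names (data and process variable
  binders never need renaming, since only closed terms are substituted).\<close>
inductive alpha :: "('ch,'d,'f) sys \<Rightarrow> ('ch,'d,'f) sys \<Rightarrow> bool" where
  alpha_refl: "alpha W W"
| alpha_sym: "alpha W W' \<Longrightarrow> alpha W' W"
| alpha_trans: "alpha W1 W2 \<Longrightarrow> alpha W2 W3 \<Longrightarrow> alpha W1 W3"
| alpha_par: "alpha W1 W1' \<Longrightarrow> alpha W2 W2' \<Longrightarrow> alpha (SPar W1 W2) (SPar W1' W2')"
| alpha_nu: "alpha W W' \<Longrightarrow> alpha (SNu c s W) (SNu c s W')"
| alpha_ren: "d \<notin> fn_sys W \<Longrightarrow> alpha (SNu c s W) (SNu d s (swap_sys c d W))"

section \<open>Intensional semantics\<close>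

primrec eval :: "('f \<Rightarrow> 'd val list \<Rightarrow> 'd val) \<Rightarrow> ('d,'f) exp \<Rightarrow> 'd val" where
  "eval I (EVal v) = v"
| "eval I (EApp f es) = I f (map (eval I) es)"

definition idle :: "('ch,'d) env \<Rightarrow> 'ch \<Rightarrow> bool" where
  "idle \<Gamma> c \<longleftrightarrow> fst (\<Gamma> c) = 0"

definition exposed :: "('ch,'d) env \<Rightarrow> 'ch \<Rightarrow> bool" where
  "exposed \<Gamma> c \<longleftrightarrow> fst (\<Gamma> c) > 0"

fun beval :: "('f \<Rightarrow> 'd val list \<Rightarrow> 'd val) \<Rightarrow> ('ch,'d) env \<Rightarrow> ('ch,'d,'f) bexp \<Rightarrow> bool" where
  "beval I \<Gamma> (BEq e1 e2) = (eval I e1 = eval I e2)"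
| "beval I \<Gamma> (BExp c) = exposed \<Gamma> c"

fun upd :: "('d val \<Rightarrow> nat) \<Rightarrow> ('ch,'d) act \<Rightarrow> ('ch,'d) env \<Rightarrow> ('ch,'d) env" where
  "upd delta ASig \<Gamma> = (\<lambda>c. (fst (\<Gamma> c) - 1, snd (\<Gamma> c)))"
| "upd delta (AOut c v) \<Gamma> =
     \<Gamma>(c := (if fst (\<Gamma> c) = 0 then (delta v, v) else (max (delta v) (fst (\<Gamma> c)), VErr)))"
| "upd delta (AIn c v) \<Gamma> =
     \<Gamma>(c := (if fst (\<Gamma> c) = 0 then (delta v, v) else (max (delta v) (fst (\<Gamma> c)), VErr)))"
| "upd delta ATau \<Gamma> = \<Gamma>"

fun act_chans :: "('ch,'d) act \<Rightarrow> 'ch set" where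
  "act_chans (AOut c v) = {c}" | "act_chans (AIn c v) = {c}"
| "act_chans ASig = {}" | "act_chans ATau = {}"

text \<open>rcv(W,c); for restriction, alpha-conversion makes the bound name differ from c,
  which amounts to requiring d \<noteq> c.\<close>
primrec rcvp :: "('ch,'d,'f) proc \<Rightarrow> 'ch \<Rightarrow> bool" where
  "rcvp (PBcast d e P) c = False"
| "rcvp (PRecv d x P Q) c = (d = c)"
| "rcvp (PSigma P) c = False"
| "rcvp (PTau P) c = False"
| "rcvp (PSum P Q) c = (rcvp P c \<or> rcvp Q c)"
| "rcvp (PCond b P Q) c = False"
| "rcvp (PVar X) c = False"
| "rcvp PNil c = False"
| "rcvp (PFix X P) c = rcvp P c"

primrec rcvs :: "('ch,'d,'f) sys \<Rightarrow> 'ch \<Rightarrow> bool" where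
  "rcvs (SProc P) c = rcvp P c"
| "rcvs (SAct d x P) c = False"
| "rcvs (SPar W1 W2) c = (rcvs W1 c \<or> rcvs W2 c)"
| "rcvs (SNu d s W) c = (d \<noteq> c \<and> rcvs W c)"

definition rcv :: "('ch,'d) env \<Rightarrow> ('ch,'d,'f) sys \<Rightarrow> 'ch \<Rightarrow> bool" where
  "rcv \<Gamma> W c \<longleftrightarrow> idle \<Gamma> c \<and> rcvs W c"

inductive trans :: "('f \<Rightarrow> 'd val list \<Rightarrow> 'd val) \<Rightarrow> ('d val \<Rightarrow> nat) \<Rightarrow> ('ch,'d) env
    \<Rightarrow> ('ch,'d,'f) sys \<Rightarrow> ('ch,'d) act \<Rightarrow> ('ch,'d,'f) sys \<Rightarrow> bool"
  for I :: "'f \<Rightarrow> 'd val list \<Rightarrow> 'd val" and delta :: "'d val \<Rightarrow> nat" where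
  Snd: "eval I e = v \<Longrightarrow> trans I delta \<Gamma> (SProc (PBcast c e P)) (AOut c v) (SProc (sigpow (delta v) P))"
| Rcv: "idle \<Gamma> c \<Longrightarrow> trans I delta \<Gamma> (SProc (PRecv c x P Q)) (AIn c v) (SAct c x P)"
| RcvIgn: "\<not> rcv \<Gamma> W c \<Longrightarrow> trans I delta \<Gamma> W (AIn c v) W"
| Sync1: "trans I delta \<Gamma> W1 (AOut c v) W1' \<Longrightarrow> trans I delta \<Gamma> W2 (AIn c v) W2'
          \<Longrightarrow> trans I delta \<Gamma> (SPar W1 W2) (AOut c v) (SPar W1' W2')"
| Sync2: "trans I delta \<Gamma> W1 (AIn c v) W1' \<Longrightarrow> trans I delta \<Gamma> W2 (AOut c v) W2'
          \<Longrightarrow> trans I delta \<Gamma> (SPar W1 W2) (AOut c v) (SPar W1' W2')"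
| RcvPar: "trans I delta \<Gamma> W1 (AIn c v) W1' \<Longrightarrow> trans I delta \<Gamma> W2 (AIn c v) W2'
          \<Longrightarrow> trans I delta \<Gamma> (SPar W1 W2) (AIn c v) (SPar W1' W2')"
| TimeNil: "trans I delta \<Gamma> (SProc PNil) ASig (SProc PNil)"
| Sleep: "trans I delta \<Gamma> (SProc (PSigma P)) ASig (SProc P)"
| ActRcv: "fst (\<Gamma> c) > 1 \<Longrightarrow> trans I delta \<Gamma> (SAct c x P) ASig (SAct c x P)"
| EndRcv: "\<Gamma> c = (1, w) \<Longrightarrow> trans I delta \<Gamma> (SAct c x P) ASig (SProc (substv x w P))"
| Timeout: "idle \<Gamma> c \<Longrightarrow> trans I delta \<Gamma> (SProc (PRecv c x P Q)) ASig (SProc Q)"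
| RcvLate: "exposed \<Gamma> c \<Longrightarrow> trans I delta \<Gamma> (SProc (PRecv c x P Q)) ATau (SAct c x (substv x VErr P))"
| Tau: "trans I delta \<Gamma> (SProc (PTau P)) ATau (SProc P)"
| Then: "beval I \<Gamma> b \<Longrightarrow> trans I delta \<Gamma> (SProc (PCond b P Q)) ATau (SProc (PSigma P))"
| Else: "\<not> beval I \<Gamma> b \<Longrightarrow> trans I delta \<Gamma> (SProc (PCond b P Q)) ATau (SProc (PSigma Q))"
| TimePar: "trans I delta \<Gamma> W1 ASig W1' \<Longrightarrow> trans I delta \<Gamma> W2 ASig W2'
          \<Longrightarrow> trans I delta \<Gamma> (SPar W1 W2) ASig (SPar W1' W2')"
| TauPar1: "trans I delta \<Gamma> W1 ATau W1' \<Longrightarrow> trans I delta \<Gamma> (SPar W1 W2) ATau (SPar W1' W2)"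
| TauPar2: "trans I delta \<Gamma> W2 ATau W2' \<Longrightarrow> trans I delta \<Gamma> (SPar W1 W2) ATau (SPar W1 W2')"
| Rec: "trans I delta \<Gamma> (SProc (substp X (PFix X P) P)) l W
          \<Longrightarrow> trans I delta \<Gamma> (SProc (PFix X P)) l W"
| Sum1: "l = ATau \<or> (\<exists>c v. l = AOut c v) \<Longrightarrow> trans I delta \<Gamma> (SProc P) l W
          \<Longrightarrow> trans I delta \<Gamma> (SProc (PSum P Q)) l W"
| Sum2: "l = ATau \<or> (\<exists>c v. l = AOut c v) \<Longrightarrow> trans I delta \<Gamma> (SProc Q) l W
          \<Longrightarrow> trans I delta \<Gamma> (SProc (PSum P Q)) l W"
| SumTime: "trans I delta \<Gamma> (SProc P) ASig (SProc P') \<Longrightarrow> trans I delta \<Gamma> (SProc Q) ASig (SProc Q')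
          \<Longrightarrow> trans I delta \<Gamma> (SProc (PSum P Q)) ASig (SProc (PSum P' Q'))"
| SumRcv1: "trans I delta \<Gamma> (SProc P) (AIn c v) W \<Longrightarrow> rcv \<Gamma> (SProc P) c
          \<Longrightarrow> trans I delta \<Gamma> (SProc (PSum P Q)) (AIn c v) W"
| SumRcv2: "trans I delta \<Gamma> (SProc Q) (AIn c v) W \<Longrightarrow> rcv \<Gamma> (SProc Q) c
          \<Longrightarrow> trans I delta \<Gamma> (SProc (PSum P Q)) (AIn c v) W"
| ResI: "trans I delta (\<Gamma>(c := s)) W (AOut c w) W'
          \<Longrightarrow> trans I delta \<Gamma> (SNu c s W) ATau (SNu c (upd delta (AOut c w) (\<Gamma>(c := s)) c) W')"
| ResV: "trans I delta (\<Gamma>(c := s)) W l W' \<Longrightarrow> c \<notin> act_chans l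
          \<Longrightarrow> trans I delta \<Gamma> (SNu c s W) l (SNu c (upd delta l (\<Gamma>(c := s)) c) W')"
| Alpha: "alpha W W2 \<Longrightarrow> trans I delta \<Gamma> W2 l W' \<Longrightarrow> trans I delta \<Gamma> W l W'"

definition red :: "('f \<Rightarrow> 'd val list \<Rightarrow> 'd val) \<Rightarrow> ('d val \<Rightarrow> nat)
    \<Rightarrow> ('ch,'d) env \<Rightarrow> ('ch,'d,'f) sys \<Rightarrow> ('ch,'d) env \<Rightarrow> ('ch,'d,'f) sys \<Rightarrow> bool" where
  "red I delta \<Gamma> W \<Gamma>' W' \<longleftrightarrow>
     (\<exists>l. (\<forall>c v. l \<noteq> AIn c v) \<and> trans I delta \<Gamma> W l W' \<and> \<Gamma>' = upd delta l \<Gamma>)"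

section \<open>Well-formedness\<close>

inductive wf_aux :: "('ch,'d) env \<Rightarrow> ('ch,'d,'f) sys \<Rightarrow> bool" where
  wf_proc: "wf_aux \<Gamma> (SProc P)"
| wf_act: "exposed \<Gamma> c \<Longrightarrow> wf_aux \<Gamma> (SAct c x P)"
| wf_par: "wf_aux \<Gamma> W1 \<Longrightarrow> wf_aux \<Gamma> W2 \<Longrightarrow> wf_aux \<Gamma> (SPar W1 W2)"
| wf_nu: "wf_aux (\<Gamma>(c := s)) W \<Longrightarrow> wf_aux \<Gamma> (SNu c s W)"

definition configuration :: "('ch,'d) env \<Rightarrow> ('ch,'d,'f) sys \<Rightarrow> bool" where
  "configuration \<Gamma> W \<longleftrightarrow> env_ok \<Gamma> \<and> closed_sys W"

definition well_formed :: "('ch,'d) env \<Rightarrow> ('ch,'d,'f) sys \<Rightarrow> bool" where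
  "well_formed \<Gamma> W \<longleftrightarrow> configuration \<Gamma> W \<and> wf_aux \<Gamma> W"

end

theory Submission
  imports Defs
begin

(* A well-formed configuration consists of (i) an environment whose stored
   values are closed, (ii) a closed system term, and (iii) the structural
   condition wf_aux: every active receiver listens on an exposed channel.
   We show that each component survives a reduction step.
   - Alpha-conversion of restricted channels preserves free variables and
     wf_aux; the latter follows from equivariance of wf_aux under channel
     swaps together with the fact that wf_aux only inspects free channels.
   - Closedness: a transition of a closed system in a closed environment leads
     to a closed system and broadcasts only closed values (closed_step).
   - Environment updates by actions carrying closed values keep the
     environment closed (env_ok_upd).
   - wf_aux is preserved by transitions of closed configurations (wf_step):
     a reception exposes its channel for delta v >= 1 time units because the
     received value v is closed, and timing steps only let an active receiver
     survive while its channel remains exposed. *)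

inductive_simps wf_proc_iff[simp]: "wf_aux \<Gamma> (SProc P)"
inductive_simps wf_act_iff[simp]: "wf_aux \<Gamma> (SAct c x P)"
inductive_simps wf_par_iff[simp]: "wf_aux \<Gamma> (SPar W1 W2)"
inductive_simps wf_nu_iff[simp]: "wf_aux \<Gamma> (SNu c s W)"

lemma wf_aux_cong:
  assumes "\<forall>e\<in>fn_sys W. \<Gamma>' e = \<Gamma> e"
  shows "wf_aux \<Gamma>' W \<longleftrightarrow> wf_aux \<Gamma> W"
  using assms
proof (induction W arbitrary: \<Gamma> \<Gamma>')
  case (SPar W1 W2)
  then have "wf_aux \<Gamma>' W1 \<longleftrightarrow> wf_aux \<Gamma> W1" and "wf_aux \<Gamma>' W2 \<longleftrightarrow> wf_aux \<Gamma> W2"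
    by (intro SPar.IH; simp)+
  then show ?case by simp
next
  case (SNu c s W)
  then have "wf_aux (\<Gamma>'(c := s)) W \<longleftrightarrow> wf_aux (\<Gamma>(c := s)) W"
    by (intro SNu.IH) auto
  then show ?case by simp
qed (auto simp: exposed_def)

lemma wf_aux_mono:
  assumes "wf_aux \<Gamma> W" and "\<forall>e. exposed \<Gamma> e \<longrightarrow> exposed \<Gamma>' e"
  shows "wf_aux \<Gamma>' W"
  using assms
proof (induction W arbitrary: \<Gamma> \<Gamma>' rule: sys.induct)
  case (SNu c s W)
  then show ?case by (simp add: exposed_def)
qed auto

section \<open>Channel swaps and alpha-conversion\<close>

lemma swapc_swapc[simp]: "swapc a b (swapc a b c) = c"
  by (simp add: swapc_def)

lemma fvp_swap[simp]: "fvp (swap_proc a b P) = fvp P"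
proof (induction P)
  case (PCond bb P Q) then show ?case by (cases bb) auto
qed auto

lemma fpv_swap[simp]: "fpv (swap_proc a b P) = fpv P"
  by (induction P) auto

lemma fvs_swap[simp]: "fvs (swap_sys a b W) = fvs W"
  by (induction W) auto

lemma fpvs_swap[simp]: "fpvs (swap_sys a b W) = fpvs W"
  by (induction W) auto

lemma wf_aux_swap:
  "wf_aux (\<Gamma> \<circ> swapc a b) (swap_sys a b W) \<longleftrightarrow> wf_aux \<Gamma> W"
proof (induction W arbitrary: \<Gamma>)
  case (SNu c s W)
  have env: "(\<Gamma> \<circ> swapc a b)(swapc a b c := s) = (\<Gamma>(c := s)) \<circ> swapc a b"
    by (rule ext) (auto simp: swapc_def)
  show ?case by (simp only: swap_sys.simps wf_nu_iff env SNu.IH)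
qed (auto simp: exposed_def)

lemma wf_aux_rename:
  assumes fresh: "d \<notin> fn_sys W"
  shows "wf_aux (\<Gamma>(d := s)) (swap_sys c d W) \<longleftrightarrow> wf_aux (\<Gamma>(c := s)) W"
proof -
  have swap_twice: "(\<Gamma>(d := s)) \<circ> swapc c d \<circ> swapc c d = \<Gamma>(d := s)"
    by (rule ext) simp
  have "wf_aux (\<Gamma>(d := s)) (swap_sys c d W)
          \<longleftrightarrow> wf_aux ((\<Gamma>(d := s)) \<circ> swapc c d) W"
    using wf_aux_swap[of "(\<Gamma>(d := s)) \<circ> swapc c d" c d W] by (simp only: swap_twice)
  also have "\<dots> \<longleftrightarrow> wf_aux (\<Gamma>(c := s)) W"
    using fresh by (intro wf_aux_cong) (auto simp: swapc_def)
  finally show ?thesis .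
qed

lemma alpha_invariant:
  assumes "alpha W W2"
  shows "fvs W2 = fvs W \<and> fpvs W2 = fpvs W \<and> (\<forall>\<Gamma>. wf_aux \<Gamma> W2 \<longleftrightarrow> wf_aux \<Gamma> W)"
  using assms
proof (induction rule: alpha.induct)
  case (alpha_nu W W' c s)
  then show ?case by (simp only: wf_nu_iff fvs.simps fpvs.simps) blast
next
  case (alpha_ren d W c s)
  then show ?case by (simp add: wf_aux_rename)
qed auto

section \<open>Closedness\<close>

lemma closed_sys_simps[simp]:
  "closed_sys (SProc P) \<longleftrightarrow> fvp P = {} \<and> fpv P = {}"
  "closed_sys (SAct c x P) \<longleftrightarrow> fvp P \<subseteq> {x} \<and> fpv P = {}"
  "closed_sys (SPar W1 W2) \<longleftrightarrow> closed_sys W1 \<and> closed_sys W2"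
  "closed_sys (SNu c s W) \<longleftrightarrow> closed_val (snd s) \<and> closed_sys W"
  by (auto simp: closed_sys_def closed_val_def)

lemma fve_substve: "fve (substve x w e) \<subseteq> (fve e - {x}) \<union> fvv w"
proof (induction e)
  case (EVal v) then show ?case by (cases v) auto
qed fastforce

lemma fvb_substvb: "fvb (substvb x w b) \<subseteq> (fvb b - {x}) \<union> fvv w"
  using fve_substve[of x w] by (cases b) fastforce+

lemma fvp_substv: "fvp (substv x w P) \<subseteq> (fvp P - {x}) \<union> fvv w"
proof (induction P)
  case (PBcast c e P) then show ?case using fve_substve[of x w e] by auto
next
  case (PCond b P Q) then show ?case using fvb_substvb[of x w b] by auto
qed auto

lemma fpv_substv[simp]: "fpv (substv x w P) = fpv P"
  by (induction P) auto

lemma closed_substv: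
  assumes "fvp P \<subseteq> {x}" and "closed_val w"
  shows "fvp (substv x w P) = {}"
  using assms fvp_substv[of x w P] by (auto simp: closed_val_def)

lemma closed_unfold:
  assumes "closed_sys (SProc (PFix X P))"
  shows "closed_sys (SProc (substp X (PFix X P) P))"
proof -
  have "fvp (substp X R Q) \<subseteq> fvp Q \<union> fvp R" for R Q :: "('a,'b,'c) proc"
    by (induction Q) auto
  moreover have "fpv (substp X R Q) \<subseteq> (fpv Q - {X}) \<union> fpv R" for R Q :: "('a,'b,'c) proc"
    by (induction Q) auto
  ultimately show ?thesis using assms by fastforce
qed

lemma fvp_sigpow[simp]: "fvp (sigpow n P) = fvp P" "fpv (sigpow n P) = fpv P"
  by (induction n) (auto simp: sigpow_def)

lemma eval_closed:
  assumes "\<forall>f vs. (\<forall>v\<in>set vs. closed_val v) \<longrightarrow> closed_val (I f vs)"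
    and "fve e = {}"
  shows "closed_val (eval I e)"
  using assms(2)
proof (induction e)
  case (EVal v) then show ?case by (simp add: closed_val_def)
next
  case (EApp f es) then show ?case using assms(1) by auto
qed

fun act_closed :: "('ch,'d) act \<Rightarrow> bool" where
  "act_closed (AOut c v) = closed_val v"
| "act_closed (AIn c v) = closed_val v"
| "act_closed ASig = True"
| "act_closed ATau = True"

lemma env_ok_upd:
  assumes "env_ok \<Gamma>" and "act_closed l"
  shows "env_ok (upd delta l \<Gamma>)"
  using assms by (cases l) (auto simp: env_ok_def closed_val_def)

lemma env_ok_update:
  assumes "env_ok \<Gamma>" and "closed_val (snd s)"
  shows "env_ok (\<Gamma>(c := s))"
  using assms by (simp add: env_ok_def)

lemma closed_step:
  assumes closed_eval: "\<forall>f vs. (\<forall>v\<in>set vs. closed_val v) \<longrightarrow> closed_val (I f vs)"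
  shows "trans I delta \<Gamma> W l W' \<Longrightarrow> env_ok \<Gamma> \<Longrightarrow> closed_sys W
    \<Longrightarrow> closed_sys W' \<and> (\<forall>c v. l = AOut c v \<longrightarrow> closed_val v)"
proof (induction rule: trans.induct)
  case (Snd e v \<Gamma> c P)
  then show ?case using eval_closed[OF closed_eval, of e] by auto
next
  case (EndRcv \<Gamma> c w x P)
  then have "closed_val w" by (metis env_ok_def snd_conv)
  with EndRcv.prems(2) show ?case by (simp add: closed_substv)
next
  case (RcvLate \<Gamma> c x P Q)
  have "closed_val VErr" by (simp add: closed_val_def)
  with RcvLate.prems(2) have "fvp (substv x VErr P) = {}" by (intro closed_substv) auto
  with RcvLate.prems(2) show ?case by simp
next
  case (Rec \<Gamma> X P l W)
  then show ?case using closed_unfold by blast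
next
  case (ResI \<Gamma> c s W w W')
  have env: "env_ok (\<Gamma>(c := s))" using ResI.prems by (intro env_ok_update) auto
  have "closed_sys W" using ResI.prems by simp
  with ResI.IH[OF env] have "closed_sys W'" and "closed_val w" by auto
  moreover have "env_ok (upd delta (AOut c w) (\<Gamma>(c := s)))"
    using env \<open>closed_val w\<close> by (intro env_ok_upd) auto
  then have "closed_val (snd (upd delta (AOut c w) (\<Gamma>(c := s)) c))"
    unfolding env_ok_def by blast
  ultimately show ?case by simp
next
  case (ResV \<Gamma> c s W l W')
  have env: "env_ok (\<Gamma>(c := s))" using ResV.prems by (intro env_ok_update) auto
  have "snd (upd delta l (\<Gamma>(c := s)) c) = snd s"
    using ResV.hyps(2) by (cases l) auto
  with ResV.prems ResV.IH[OF env] show ?case by auto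
next
  case (Alpha W W2 \<Gamma> l W')
  then show ?case using alpha_invariant[OF Alpha.hyps(1)] by (auto simp: closed_sys_def)
qed auto

section \<open>Preservation of the structural well-formedness condition\<close>

lemma exposed_upd:
  assumes "l \<noteq> ASig" and "exposed \<Gamma> e"
  shows "exposed (upd delta l \<Gamma>) e"
  using assms by (cases l) (auto simp: exposed_def)

lemma upd_restrict:
  assumes "c \<notin> act_chans l"
  shows "(upd delta l \<Gamma>)(c := upd delta l (\<Gamma>(c := s)) c) = upd delta l (\<Gamma>(c := s))"
  using assms by (cases l) (auto simp: fun_eq_iff)

text \<open>The key cases are reception (the channel becomes exposed
  for delta v \<ge> 1 units, so the new active receiver is well-formed) and
  time passing (an active receiver only survives while its channel stays
  exposed).  Closedness is needed because a synchronising receiver obtains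
  its value from a broadcast, possibly hidden under a restriction.\<close>
lemma wf_step:
  assumes closed_eval: "\<forall>f vs. (\<forall>v\<in>set vs. closed_val v) \<longrightarrow> closed_val (I f vs)"
    and delta_pos: "\<forall>v. closed_val v \<longrightarrow> delta v \<ge> 1"
  shows "trans I delta \<Gamma> W l W' \<Longrightarrow> env_ok \<Gamma> \<Longrightarrow> closed_sys W \<Longrightarrow> wf_aux \<Gamma> W
    \<Longrightarrow> (\<forall>c v. l = AIn c v \<longrightarrow> closed_val v) \<Longrightarrow> wf_aux (upd delta l \<Gamma>) W'"
proof (induction rule: trans.induct)
  case (Rcv \<Gamma> c x P Q v)
  then show ?case using delta_pos by (auto simp: idle_def exposed_def)
next
  case (RcvIgn \<Gamma> W c v)
  then show ?case by (blast intro: wf_aux_mono exposed_upd)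
next
  case (Sync1 \<Gamma> W1 c v W1' W2 W2')
  then have "closed_val v" using closed_step[OF closed_eval Sync1.hyps(1)] by auto
  with Sync1 show ?case by auto
next
  case (Sync2 \<Gamma> W1 c v W1' W2 W2')
  then have "closed_val v" using closed_step[OF closed_eval Sync2.hyps(2)] by auto
  with Sync2 show ?case by auto
next
  case (ActRcv \<Gamma> c x P)
  then show ?case by (auto simp: exposed_def)
next
  case (Rec \<Gamma> X P l W)
  then show ?case using closed_unfold[OF Rec.prems(2)] by simp
next
  case (ResI \<Gamma> c s W w W')
  have env: "env_ok (\<Gamma>(c := s))" using ResI.prems by (intro env_ok_update) auto
  have "closed_sys W" and "wf_aux (\<Gamma>(c := s)) W" using ResI.prems by simp_all
  then have "wf_aux (upd delta (AOut c w) (\<Gamma>(c := s))) W'"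
    using ResI.prems by (intro ResI.IH[OF env]) (simp_all add: fun_upd_def)
  \<comment> \<open>the broadcast on c only changes the local state of the restriction\<close>
  moreover have "\<Gamma>(c := upd delta (AOut c w) (\<Gamma>(c := s)) c) = upd delta (AOut c w) (\<Gamma>(c := s))"
    by (simp add: fun_eq_iff)
  ultimately show ?case by (simp only: upd.simps(4) wf_nu_iff)
next
  case (ResV \<Gamma> c s W l W')
  have env: "env_ok (\<Gamma>(c := s))" using ResV.prems by (intro env_ok_update) auto
  have "closed_sys W" and "wf_aux (\<Gamma>(c := s)) W" using ResV.prems by simp_all
  then have "wf_aux (upd delta l (\<Gamma>(c := s))) W'"
    using ResV.prems by (intro ResV.IH[OF env]) (simp_all add: fun_upd_def)
  then show ?case by (simp only: wf_nu_iff upd_restrict[OF ResV.hyps(2)])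
next
  case (Alpha W W2 \<Gamma> l W')
  then show ?case using alpha_invariant[OF Alpha.hyps(1)] by (auto simp: closed_sys_def)
qed auto

theorem mainTheorem10:
  fixes I :: "'f \<Rightarrow> 'd val list \<Rightarrow> 'd val"
    and delta :: "'d val \<Rightarrow> nat"
    and \<Gamma> \<Gamma>' :: "('ch,'d) env"
    and W W' :: "('ch,'d,'f) sys"
  assumes closed_eval: "\<forall>f vs. (\<forall>v\<in>set vs. closed_val v) \<longrightarrow> closed_val (I f vs)"
    and delta_pos: "\<forall>v. closed_val v \<longrightarrow> delta v \<ge> 1"
    and guarded: "guarded_sys W"
    and wf: "well_formed \<Gamma> W"
    and step: "red I delta \<Gamma> W \<Gamma>' W'"
  shows "well_formed \<Gamma>' W'"
proof -
  from step obtain l where no_input: "\<forall>c v. l \<noteq> AIn c v"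
    and tr: "trans I delta \<Gamma> W l W'" and \<Gamma>': "\<Gamma>' = upd delta l \<Gamma>"
    unfolding red_def by blast
  from wf have env: "env_ok \<Gamma>" and closed: "closed_sys W" and wa: "wf_aux \<Gamma> W"
    unfolding well_formed_def configuration_def by auto
  from closed_step[OF closed_eval tr env closed] have closed': "closed_sys W'"
    and out_closed: "\<forall>c v. l = AOut c v \<longrightarrow> closed_val v" by auto
  have "act_closed l"
    using no_input out_closed by (cases l) auto
  with env have env': "env_ok \<Gamma>'"
    unfolding \<Gamma>' by (rule env_ok_upd)
  have wa': "wf_aux \<Gamma>' W'"
    unfolding \<Gamma>' using wf_step[OF closed_eval delta_pos tr env closed wa] no_input by blast
  from env' closed' wa' show ?thesis
    unfolding well_formed_def configuration_def by auto
qed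

end
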